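(* Let $\mathcal{A}$ be a unital algebra, $\tau:\mathcal{A}\to\mathbb{C}$ a unital linear functional and $\tau':\mathcal{A}\to\mathbb{C}$ a linear functional with $\tau'(1)=0$, and let $\mathcal{A}_1,\mathcal{A}_2$ be two unital subalgebras which are infinitesimally free with respect to $(\tau,\tau')$. Let $\mathcal{I}$ be an ideal of $\mathcal{A}$ with $\mathcal{I}\subset \ker(\tau)$. Then $(\mathcal{A}_1,\mathcal{I}\cap \mathcal{A}_1)$ and $(\mathcal{A}_2,\mathcal{I}\cap \mathcal{A}_2)$ are free of type $B$ in $(\mathcal{A},\tau,\mathcal{I},\tau'|_{\mathcal{I}})$.
   Context: Infinitesimal freeness w.r.t. $(\tau,\tau')$: whenever $a_j\in\mathcal{A}_{i_j}$ with consecutive indices different and $\tau(a_j)=0$ for all $j$, $\tau(a_1\cdots a_n)=0$ and $\tau'(a_1\cdots a_n)=\sum_{j=1}^n\tau(a_1\cdots a_{j-1}\tau'(a_j)a_{j+1}\cdots a_n)$. Freeness of type $B$ in $(\mathcal{A},\tau,\mathcal{I},\phi)$ with $\phi:\mathcal{I}\to\mathbb{C}$ linear, for pairs $(\mathcal{A}_h,V_h)$ with $V_h\subset\mathcal{I}$ a subspace stable under two-sided multiplication by $\mathcal{A}_h$: $\mathcal{A}_1,\mathcal{A}_2$ are free w.r.t. $\tau$, and whenever $a_n\in\mathcal{A}_{i_n},\dots,a_1\in\mathcal{A}_{i_1}$, $v\in V_h$, $b_1\in\mathcal{A}_{j_1},\dots,b_m\in\mathcal{A}_{j_m}$ with any two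 consecutive indices in $i_n,\dots,i_1,h,j_1,\dots,j_m$ different and all $a_r,b_s$ centered for $\tau$, $\phi(a_n\cdots a_1vb_1\cdots b_m)=\tau(a_nb_m)\cdots\tau(a_1b_1)\phi(v)$ if $n=m$ and $i_r=j_r$ for all $r$, and $=0$ otherwise. *)

theory Defs
  imports Complex_Main
begin

definition complex_unital_algebra :: "(complex \<Rightarrow> 'a::ring_1 \<Rightarrow> 'a) \<Rightarrow> bool" where
  "complex_unital_algebra sc \<longleftrightarrow> module sc \<and>
     (\<forall>c x y. sc c (x * y) = sc c x * y \<and> sc c (x * y) = x * sc c y)"

definition lin_functional :: "(complex \<Rightarrow> 'a::ring_1 \<Rightarrow> 'a) \<Rightarrow> ('a \<Rightarrow> complex) \<Rightarrow> bool" where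
  "lin_functional sc f \<longleftrightarrow> (\<forall>x y. f (x + y) = f x + f y) \<and> (\<forall>c x. f (sc c x) = c * f x)"

definition subspace_of :: "(complex \<Rightarrow> 'a::ring_1 \<Rightarrow> 'a) \<Rightarrow> 'a set \<Rightarrow> bool" where
  "subspace_of sc V \<longleftrightarrow> 0 \<in> V \<and> (\<forall>x\<in>V. \<forall>y\<in>V. x + y \<in> V) \<and> (\<forall>c. \<forall>x\<in>V. sc c x \<in> V)"

definition unital_subalgebra :: "(complex \<Rightarrow> 'a::ring_1 \<Rightarrow> 'a) \<Rightarrow> 'a set \<Rightarrow> bool" where
  "unital_subalgebra sc B \<longleftrightarrow> subspace_of sc B \<and> 1 \<in> B \<and> (\<forall>x\<in>B. \<forall>y\<in>B. x * y \<in> B)"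

definition alg_ideal :: "(complex \<Rightarrow> 'a::ring_1 \<Rightarrow> 'a) \<Rightarrow> 'a set \<Rightarrow> bool" where
  "alg_ideal sc I \<longleftrightarrow> subspace_of sc I \<and> (\<forall>x\<in>I. \<forall>y. x * y \<in> I \<and> y * x \<in> I)"

definition fam2 :: "'a set \<Rightarrow> 'a set \<Rightarrow> nat \<Rightarrow> 'a set" where
  "fam2 A1 A2 k = (if k = 1 then A1 else A2)"

text \<open>Admissible word of length n: a r (r < n) stands for a_{r+1}, lying in the
subalgebra with index i r in {1,2}, consecutive indices different, all centered.\<close>
definition alt_centered ::
  "('a::ring_1 \<Rightarrow> complex) \<Rightarrow> (nat \<Rightarrow> 'a set) \<Rightarrow> nat \<Rightarrow> (nat \<Rightarrow> nat) \<Rightarrow> (nat \<Rightarrow> 'a) \<Rightarrow> bool" where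
  "alt_centered \<tau> Alg n i a \<longleftrightarrow>
     (\<forall>r<n. i r \<in> {1,2} \<and> a r \<in> Alg (i r) \<and> \<tau> (a r) = 0) \<and>
     (\<forall>r. Suc r < n \<longrightarrow> i r \<noteq> i (Suc r))"

definition free_wrt ::
  "('a::ring_1 \<Rightarrow> complex) \<Rightarrow> 'a set \<Rightarrow> 'a set \<Rightarrow> bool" where
  "free_wrt \<tau> A1 A2 \<longleftrightarrow>
     (\<forall>n i a. n \<ge> 1 \<longrightarrow> alt_centered \<tau> (fam2 A1 A2) n i a \<longrightarrow>
        \<tau> (prod_list (map a [0..<n])) = 0)"

definition inf_free_wrt ::
  "(complex \<Rightarrow> 'a::ring_1 \<Rightarrow> 'a) \<Rightarrow> ('a \<Rightarrow> complex) \<Rightarrow> ('a \<Rightarrow> complex) \<Rightarrow> 'a set \<Rightarrow> 'a set \<Rightarrow> bool" where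
  "inf_free_wrt sc \<tau> \<tau>' A1 A2 \<longleftrightarrow>
     (\<forall>n i a. n \<ge> 1 \<longrightarrow> alt_centered \<tau> (fam2 A1 A2) n i a \<longrightarrow>
        \<tau> (prod_list (map a [0..<n])) = 0 \<and>
        \<tau>' (prod_list (map a [0..<n])) =
          (\<Sum>j<n. \<tau> (prod_list (map (\<lambda>k. if k = j then sc (\<tau>' (a j)) 1 else a k) [0..<n]))))"

text \<open>Freeness of type B of the pairs (A1,V1), (A2,V2) in (A, tau, I, phi).
Here phi is only ever evaluated on elements of I.\<close>
definition free_type_B ::
  "(complex \<Rightarrow> 'a::ring_1 \<Rightarrow> 'a) \<Rightarrow> ('a \<Rightarrow> complex) \<Rightarrow> 'a set \<Rightarrow> ('a \<Rightarrow> complex) \<Rightarrow>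
   'a set \<Rightarrow> 'a set \<Rightarrow> 'a set \<Rightarrow> 'a set \<Rightarrow> bool" where
  "free_type_B sc \<tau> I \<phi> A1 V1 A2 V2 \<longleftrightarrow>
     (\<forall>h\<in>{1,2}. subspace_of sc (fam2 V1 V2 h) \<and> fam2 V1 V2 h \<subseteq> I \<and>
        (\<forall>x\<in>fam2 A1 A2 h. \<forall>v\<in>fam2 V1 V2 h. x * v \<in> fam2 V1 V2 h \<and> v * x \<in> fam2 V1 V2 h)) \<and>
     free_wrt \<tau> A1 A2 \<and>
     (\<forall>h\<in>{1::nat,2}. \<forall>v\<in>fam2 V1 V2 h. \<forall>n m i a j b.
        alt_centered \<tau> (fam2 A1 A2) n i a \<longrightarrow> alt_centered \<tau> (fam2 A1 A2) m j b \<longrightarrow>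
        (n > 0 \<longrightarrow> i 0 \<noteq> h) \<longrightarrow> (m > 0 \<longrightarrow> j 0 \<noteq> h) \<longrightarrow>
        \<phi> (prod_list (map a (rev [0..<n])) * v * prod_list (map b [0..<m])) =
          (if n = m \<and> (\<forall>r<n. i r = j r)
           then (\<Prod>r<n. \<tau> (a r * b r)) * \<phi> v else 0))"

end

theory Submission
  imports Defs
begin

text \<open>The word \<open>a\<^sub>n \<cdots> a\<^sub>1 v b\<^sub>1 \<cdots> b\<^sub>m\<close> is alternating and centred, since \<open>\<tau>\<close> vanishes
on \<open>\<I>\<close>. Infinitesimal freeness writes its \<open>\<tau>'\<close>-value as a sum of \<open>\<tau>\<close>-values of the words
in which one letter is replaced by its \<open>\<tau>'\<close>-value. Every term in which that letter is not
\<open>v\<close> still contains \<open>v\<close>, so it lies in \<open>\<I> \<subseteq> ker \<tau>\<close>; the remaining term is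
\<open>\<tau>'(v) \<tau>(a\<^sub>n \<cdots> a\<^sub>1 b\<^sub>1 \<cdots> b\<^sub>m)\<close>. For free subalgebras the latter equals
\<open>\<delta>\<^sub>n\<^sub>m \<Prod> \<tau>(a\<^sub>r b\<^sub>r)\<close>: write \<open>a\<^sub>1 b\<^sub>1 = c + \<tau>(a\<^sub>1 b\<^sub>1) 1\<close> with \<open>c\<close> centred, so the
\<open>c\<close>-word is alternating and killed by \<open>\<tau>\<close>, and induct on \<open>n\<close>.\<close>

lemma prod_list_map_upt_Suc:
  "prod_list (map f [0..<Suc n]) = f 0 * prod_list (map (\<lambda>k. f (Suc k)) [0..<n])"
  by (simp add: upt_conv_Cons map_Suc_upt[symmetric] o_def del: upt_Suc)

lemma prod_list_map_rev_upt_Suc: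
  "prod_list (map f (rev [0..<Suc n])) = prod_list (map (\<lambda>k. f (Suc k)) (rev [0..<n])) * f 0"
  by (simp add: upt_conv_Cons map_Suc_upt[symmetric] o_def rev_map del: upt_Suc)

lemma prod_list_in_ideal:
  assumes "\<forall>x\<in>I. \<forall>y. x * y \<in> I \<and> y * x \<in> I" and "x \<in> set xs" and "f x \<in> I"
  shows "prod_list (map f xs) \<in> I"
  using assms(2) by (induction xs) (use assms in auto)

definition rev_append_word :: "(nat \<Rightarrow> 'b) \<Rightarrow> nat \<Rightarrow> (nat \<Rightarrow> 'b) \<Rightarrow> nat \<Rightarrow> 'b" where
  "rev_append_word a n b k = (if k < n then a (n - 1 - k) else b (k - n))"

lemma map_rev_append_word:
  "map (rev_append_word a n b) [0..<n + m] = map a (rev [0..<n]) @ map b [0..<m]"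
  by (rule nth_equalityI) (auto simp: rev_append_word_def nth_append rev_nth)

lemma alt_centered_Suc:
  "alt_centered \<tau> F (Suc n) i a \<longleftrightarrow>
     i 0 \<in> {1,2} \<and> a 0 \<in> F (i 0) \<and> \<tau> (a 0) = 0 \<and> (n > 0 \<longrightarrow> i 0 \<noteq> i 1) \<and>
     alt_centered \<tau> F n (\<lambda>k. i (Suc k)) (\<lambda>k. a (Suc k))"
  unfolding alt_centered_def
  by (cases n) (auto simp: All_less_Suc2)

lemma rev_append_word_Suc:
  "rev_append_word a (Suc n) b = rev_append_word (\<lambda>k. a (Suc k)) n (case_nat (a 0) b)"
proof
  fix k
  show "rev_append_word a (Suc n) b k = rev_append_word (\<lambda>k. a (Suc k)) n (case_nat (a 0) b) k"
    by (cases "k - n") (auto simp: rev_append_word_def Suc_diff_Suc intro!: arg_cong[where f = b])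
qed

lemma alt_centered_rev_append_word:
  assumes "alt_centered \<tau> F n i a" and "alt_centered \<tau> F m j b"
    and "n > 0 \<and> m > 0 \<longrightarrow> i 0 \<noteq> j 0"
  shows "alt_centered \<tau> F (n + m) (rev_append_word i n j) (rev_append_word a n b)"
  using assms
proof (induction n arbitrary: m i a j b)
  case 0
  then show ?case by (simp add: rev_append_word_def)
next
  case (Suc n)
  have "alt_centered \<tau> F (Suc m) (case_nat (i 0) j) (case_nat (a 0) b)"
    using Suc.prems by (simp add: alt_centered_Suc)
  then have "alt_centered \<tau> F (n + Suc m)
      (rev_append_word (\<lambda>k. i (Suc k)) n (case_nat (i 0) j))
      (rev_append_word (\<lambda>k. a (Suc k)) n (case_nat (a 0) b))"
    using Suc.prems(1) by (intro Suc.IH) (auto simp: alt_centered_Suc)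
  then show ?case by (simp add: rev_append_word_Suc)
qed

lemma prod_list_rev_append_word_Cons:
  "prod_list (map (rev_append_word a n (case_nat v b)) [0..<n + Suc m])
     = prod_list (map a (rev [0..<n])) * v * prod_list (map b [0..<m])"
  by (simp only: map_rev_append_word prod_list.append prod_list_map_upt_Suc mult.assoc) simp

lemma rev_append_word_Cons_upd:
  "(rev_append_word a n (case_nat v b))(n := w) = rev_append_word a n (case_nat w b)"
  by (auto simp: rev_append_word_def fun_eq_iff split: nat.split)

lemma lin_functional_add: "lin_functional sc f \<Longrightarrow> f (x + y) = f x + f y"
  and lin_functional_scale: "lin_functional sc f \<Longrightarrow> f (sc c x) = c * f x"
  unfolding lin_functional_def by auto

lemma mult_scale_one_mult:
  assumes "complex_unital_algebra sc"
  shows "x * sc c 1 * y = sc c (x * y)"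
proof -
  have "sc c 1 * y = sc c y" and "x * sc c y = sc c (x * y)"
    using assms unfolding complex_unital_algebra_def by (metis mult_1_left)+
  then show ?thesis by (simp add: mult.assoc)
qed

lemma centered_decomposition:
  assumes alg: "complex_unital_algebra sc" and lin: "lin_functional sc \<tau>" and "\<tau> 1 = 1"
    and "unital_subalgebra sc B" and "x \<in> B"
  shows "x + sc (- \<tau> x) 1 \<in> B" and "\<tau> (x + sc (- \<tau> x) 1) = 0"
    and "x = (x + sc (- \<tau> x) 1) + sc (\<tau> x) 1"
proof -
  have md: "module sc"
    using alg unfolding complex_unital_algebra_def by blast
  show "x + sc (- \<tau> x) 1 \<in> B"
    using assms(4,5) unfolding unital_subalgebra_def subspace_of_def by blast
  show "\<tau> (x + sc (- \<tau> x) 1) = 0"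
    using assms(3) by (simp add: lin_functional_add[OF lin] lin_functional_scale[OF lin])
  show "x = (x + sc (- \<tau> x) 1) + sc (\<tau> x) 1"
    using module.scale_left_distrib[OF md, of "- \<tau> x" "\<tau> x" 1]
    by (simp add: module.scale_zero_left[OF md] add.assoc)
qed

lemma unital_subalgebra_fam2:
  "unital_subalgebra sc A1 \<Longrightarrow> unital_subalgebra sc A2 \<Longrightarrow> unital_subalgebra sc (fam2 A1 A2 h)"
  unfolding fam2_def by simp

lemma free_wrtD:
  "free_wrt \<tau> A1 A2 \<Longrightarrow> n \<ge> 1 \<Longrightarrow> alt_centered \<tau> (fam2 A1 A2) n i a \<Longrightarrow>
     \<tau> (prod_list (map a [0..<n])) = 0"
  unfolding free_wrt_def by blast

lemma inf_free_wrt_imp_free_wrt: "inf_free_wrt sc \<tau> \<tau>' A1 A2 \<Longrightarrow> free_wrt \<tau> A1 A2"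
  unfolding inf_free_wrt_def free_wrt_def by blast

lemma inf_free_wrtD:
  "inf_free_wrt sc \<tau> \<tau>' A1 A2 \<Longrightarrow> n \<ge> 1 \<Longrightarrow> alt_centered \<tau> (fam2 A1 A2) n i a \<Longrightarrow>
     \<tau>' (prod_list (map a [0..<n])) = (\<Sum>k<n. \<tau> (prod_list (map (a(k := sc (\<tau>' (a k)) 1)) [0..<n])))"
  unfolding inf_free_wrt_def fun_upd_def by blast

context
  fixes sc :: "complex \<Rightarrow> 'a::ring_1 \<Rightarrow> 'a" and \<tau> :: "'a \<Rightarrow> complex" and A1 A2 :: "'a set"
  assumes alg: "complex_unital_algebra sc"
    and lin: "lin_functional sc \<tau>" and unit: "\<tau> 1 = 1"
    and sub1: "unital_subalgebra sc A1" and sub2: "unital_subalgebra sc A2"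
    and free: "free_wrt \<tau> A1 A2"
begin

lemma free_tau_rev_mult_unmatched:
  assumes "alt_centered \<tau> (fam2 A1 A2) n i a" and "alt_centered \<tau> (fam2 A1 A2) m j b"
    and "\<not> (n > 0 \<and> m > 0 \<and> i 0 = j 0)"
  shows "\<tau> (prod_list (map a (rev [0..<n])) * prod_list (map b [0..<m]))
    = (if n = m \<and> (\<forall>r<n. i r = j r) then \<Prod>r<n. \<tau> (a r * b r) else 0)"
proof (cases "n + m = 0")
  case True
  then show ?thesis using unit by simp
next
  case False
  then have "\<tau> (prod_list (map (rev_append_word a n b) [0..<n + m])) = 0"
    using alt_centered_rev_append_word[OF assms(1,2)] assms(3) by (intro free_wrtD[OF free]) auto
  moreover have "(n = m \<and> (\<forall>r<n. i r = j r)) = False"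
    using False assms(3) by auto
  ultimately show ?thesis by (simp only: map_rev_append_word prod_list.append if_False)
qed

lemma free_tau_rev_mult:
  assumes "alt_centered \<tau> (fam2 A1 A2) n i a" and "alt_centered \<tau> (fam2 A1 A2) m j b"
  shows "\<tau> (prod_list (map a (rev [0..<n])) * prod_list (map b [0..<m]))
    = (if n = m \<and> (\<forall>r<n. i r = j r) then \<Prod>r<n. \<tau> (a r * b r) else 0)"
  using assms
proof (induction n arbitrary: m i a j b)
  case 0
  then show ?case by (intro free_tau_rev_mult_unmatched) simp_all
next
  case (Suc n)
  show ?case
  proof (cases "m > 0 \<and> i 0 = j 0")
    case False
    then show ?thesis using free_tau_rev_mult_unmatched[OF Suc.prems] by blast
  next
    case True
    then obtain m' where m: "m = Suc m'" and ij: "i 0 = j 0"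
      using gr0_implies_Suc by blast
    let ?F = "fam2 A1 A2"
    let ?A = "prod_list (map (\<lambda>k. a (Suc k)) (rev [0..<n]))"
    let ?B = "prod_list (map (\<lambda>k. b (Suc k)) [0..<m'])"
    define t where "t = \<tau> (a 0 * b 0)"
    define c where "c = a 0 * b 0 + sc (- t) 1"
    note alt_a = Suc.prems(1)[unfolded alt_centered_Suc]
    note alt_b = Suc.prems(2)[unfolded m alt_centered_Suc, folded ij]
    have "a 0 * b 0 \<in> ?F (i 0)"
      using alt_a alt_b unital_subalgebra_fam2[OF sub1 sub2, of "i 0"]
      unfolding unital_subalgebra_def by blast
    from centered_decomposition[OF alg lin unit unital_subalgebra_fam2[OF sub1 sub2] this,
        folded t_def, folded c_def]
    have c: "c \<in> ?F (i 0)" "\<tau> c = 0" and ab: "a 0 * b 0 = c + sc t 1"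
      by blast+
    have alt_c: "alt_centered \<tau> ?F (n + Suc m')
        (rev_append_word (\<lambda>k. i (Suc k)) n (case_nat (i 0) (\<lambda>k. j (Suc k))))
        (rev_append_word (\<lambda>k. a (Suc k)) n (case_nat c (\<lambda>k. b (Suc k))))"
      using alt_a alt_b c by (intro alt_centered_rev_append_word) (auto simp: alt_centered_Suc)
    have centred_term: "\<tau> (?A * c * ?B) = 0"
      unfolding prod_list_rev_append_word_Cons[symmetric] by (rule free_wrtD[OF free _ alt_c]) simp
    have "\<tau> (?A * sc t 1 * ?B) = t * \<tau> (?A * ?B)"
      by (simp add: mult_scale_one_mult[OF alg] lin_functional_scale[OF lin])
    also have "\<dots> = t * (if n = m' \<and> (\<forall>r<n. i (Suc r) = j (Suc r))
        then \<Prod>r<n. \<tau> (a (Suc r) * b (Suc r)) else 0)"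
      using Suc.IH alt_a alt_b by simp
    also have "\<dots> = (if Suc n = m \<and> (\<forall>r<Suc n. i r = j r) then \<Prod>r<Suc n. \<tau> (a r * b r) else 0)"
      by (auto simp: m ij t_def All_less_Suc2 prod.lessThan_Suc_shift simp del: prod.lessThan_Suc)
    finally have scalar_term: "\<tau> (?A * sc t 1 * ?B) = \<dots>" .
    have "prod_list (map a (rev [0..<Suc n])) * prod_list (map b [0..<m])
        = ?A * (a 0 * b 0) * ?B"
      unfolding prod_list_map_rev_upt_Suc m prod_list_map_upt_Suc by (simp only: mult.assoc)
    also have "\<dots> = ?A * c * ?B + ?A * sc t 1 * ?B"
      unfolding ab by (simp only: distrib_left distrib_right)
    finally show ?thesis
      using centred_term scalar_term by (simp add: lin_functional_add[OF lin])
  qed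
qed

end

lemma fam2_Int: "fam2 (I \<inter> A1) (I \<inter> A2) h = I \<inter> fam2 A1 A2 h"
  unfolding fam2_def by simp

lemma ideal_Int_subalgebra:
  assumes "alg_ideal sc I" and "unital_subalgebra sc B"
  shows "subspace_of sc (I \<inter> B)" and "\<forall>x\<in>B. \<forall>v\<in>I \<inter> B. x * v \<in> I \<inter> B \<and> v * x \<in> I \<inter> B"
  using assms unfolding alg_ideal_def unital_subalgebra_def subspace_of_def by auto

lemma inf_free_tau'_rev_mult_ideal:
  assumes alg: "complex_unital_algebra sc" and lin: "lin_functional sc \<tau>" and unit: "\<tau> 1 = 1"
    and sub1: "unital_subalgebra sc A1" and sub2: "unital_subalgebra sc A2"
    and inf_free: "inf_free_wrt sc \<tau> \<tau>' A1 A2"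
    and ideal: "alg_ideal sc I" and ker: "\<forall>x\<in>I. \<tau> x = 0"
    and h: "h \<in> {1,2}" and v: "v \<in> I \<inter> fam2 A1 A2 h"
    and alt_a: "alt_centered \<tau> (fam2 A1 A2) n i a" and alt_b: "alt_centered \<tau> (fam2 A1 A2) m j b"
    and i0: "n > 0 \<longrightarrow> i 0 \<noteq> h" and j0: "m > 0 \<longrightarrow> j 0 \<noteq> h"
  shows "\<tau>' (prod_list (map a (rev [0..<n])) * v * prod_list (map b [0..<m])) =
      (if n = m \<and> (\<forall>r<n. i r = j r) then (\<Prod>r<n. \<tau> (a r * b r)) * \<tau>' v else 0)"
proof -
  define N where "N = n + Suc m"
  define d where "d = rev_append_word a n (case_nat v b)"
  have d_n: "d n = v"
    by (simp add: d_def rev_append_word_def)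
  have alt_d: "alt_centered \<tau> (fam2 A1 A2) N (rev_append_word i n (case_nat h j)) d"
    unfolding N_def d_def using alt_a alt_b h v i0 j0 ker
    by (intro alt_centered_rev_append_word) (auto simp: alt_centered_Suc)
  have ideal_term: "\<tau> (prod_list (map (d(k := w)) [0..<N])) = 0" if "k \<noteq> n" for k w
  proof -
    have "prod_list (map (d(k := w)) [0..<N]) \<in> I"
      using ideal that v d_n unfolding alg_ideal_def
      by (intro prod_list_in_ideal[of I n]) (auto simp: N_def)
    then show ?thesis using ker by blast
  qed
  have "\<tau>' (prod_list (map a (rev [0..<n])) * v * prod_list (map b [0..<m]))
      = \<tau>' (prod_list (map d [0..<N]))"
    by (simp only: N_def d_def prod_list_rev_append_word_Cons)
  also have "\<dots> = (\<Sum>k<N. \<tau> (prod_list (map (d(k := sc (\<tau>' (d k)) 1)) [0..<N])))"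
    by (rule inf_free_wrtD[OF inf_free _ alt_d]) (simp add: N_def)
  also have "\<dots> = \<tau> (prod_list (map (d(n := sc (\<tau>' v) 1)) [0..<N]))"
  proof -
    have "n \<in> {..<N}"
      by (simp add: N_def)
    then show ?thesis
      by (simp add: sum.remove d_n ideal_term sum.neutral)
  qed
  also have "\<dots> = \<tau> (prod_list (map a (rev [0..<n])) * sc (\<tau>' v) 1 * prod_list (map b [0..<m]))"
    by (simp only: N_def d_def rev_append_word_Cons_upd prod_list_rev_append_word_Cons)
  also have "\<dots> = \<tau>' v * \<tau> (prod_list (map a (rev [0..<n])) * prod_list (map b [0..<m]))"
    by (simp add: mult_scale_one_mult[OF alg] lin_functional_scale[OF lin])
  also have "\<dots> = (if n = m \<and> (\<forall>r<n. i r = j r) then (\<Prod>r<n. \<tau> (a r * b r)) * \<tau>' v else 0)"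
    using free_tau_rev_mult[OF alg lin unit sub1 sub2 inf_free_wrt_imp_free_wrt[OF inf_free]
        alt_a alt_b]
    by (auto simp: mult.commute)
  finally show ?thesis .
qed

theorem proposition2p8:
  fixes sc :: "complex \<Rightarrow> 'a::ring_1 \<Rightarrow> 'a"
    and \<tau> \<tau>' :: "'a \<Rightarrow> complex"
    and A1 A2 I :: "'a set"
  assumes "complex_unital_algebra sc"
    and "lin_functional sc \<tau>" and "\<tau> 1 = 1"
    and "lin_functional sc \<tau>'" and "\<tau>' 1 = 0"
    and "unital_subalgebra sc A1" and "unital_subalgebra sc A2"
    and "inf_free_wrt sc \<tau> \<tau>' A1 A2"
    and "alg_ideal sc I" and "\<forall>x\<in>I. \<tau> x = 0"
  shows "free_type_B sc \<tau> I \<tau>' A1 (I \<inter> A1) A2 (I \<inter> A2)"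
  unfolding free_type_B_def fam2_Int
  using ideal_Int_subalgebra[OF assms(9) unital_subalgebra_fam2[OF assms(6,7)]]
    inf_free_wrt_imp_free_wrt[OF assms(8)] inf_free_tau'_rev_mult_ideal[OF assms(1-3,6-10)]
  by blast

end
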